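(* Let $L>1$ and define $$\sigma_{0,2}=\frac{L+1}{L\ln L},\qquad \sigma_{1,2}=\frac{(L^2+1)+\sqrt{(L-1)^4+4L^2}}{2L(L-1)},$$ $$\sigma_{2,1}=\frac{(1+L^4)-\sqrt{(1+L^4)^2-4L(1+L^2)^2(1-L)^2}}{L(L-1)(1+L^2)}.$$ Then (1) $\sigma_{0,2}\le\sigma_{1,2}$ and (2) $\sigma_{2,1}\le\sigma_{0,2}$.
   Context: These are (for $n=2$) Steklov eigenvalues of the planar annulus $\{1<|x|<L\}$, but the claim is the stated inequality between the explicit expressions. *)

theory Defs
  imports Complex_Main
begin

end

theory Submission
  imports Defs "HOL-Analysis.Analysis"
begin

text \<open>
  Both inequalities rest on the two-sided bound
  \<open>2 (L - 1) / (L + 1) \<le> ln L \<le> (L - 1) / sqrt L\<close>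
  (the first term of the series of \<open>ln\<close> in powers of \<open>(L - 1) / (L + 1)\<close>,
  and the trapezoid rule for the convex function \<open>1 / t\<close> on \<open>[1, sqrt L]\<close>).
  For (1) the lower bound gives \<open>\<sigma>\<^sub>0\<^sub>2 \<le> (L + 1)\<^sup>2 / (2 L (L - 1))\<close>, and
  \<open>sqrt ((L - 1)\<^sup>4 + 4 L\<^sup>2) \<ge> 2 L\<close>.
  For (2) the numerator of \<open>\<sigma>\<^sub>2\<^sub>1\<close> has the form \<open>A - sqrt (A\<^sup>2 - B)\<close>;
  rationalising and using \<open>sqrt (A\<^sup>2 - B) \<ge> (A\<^sup>2 - B) / A\<close> bounds it by
  \<open>A B / (2 A\<^sup>2 - B)\<close>. Together with the upper bound on \<open>ln L\<close> this leaves a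
  polynomial inequality in \<open>u = sqrt L\<close>, which has only positive coefficients
  after the shift \<open>u = 1 + v\<close>.
\<close>

lemma ln_ge_two_mult_diff_div_add:
  fixes x :: real
  assumes "1 \<le> x"
  shows "2 * (x - 1) / (x + 1) \<le> ln x"
proof -
  let ?t = "\<lambda>n. 2 * ((x - 1) / (x + 1)) ^ (2*n+1) / of_nat (2*n+1)"
  have t_sums: "?t sums ln x"
    using assms by (intro ln_series_quadratic) simp
  have "sum ?t {..<1} \<le> suminf ?t"
    by (rule sum_le_suminf[OF sums_summable[OF t_sums]]) (use assms in simp_all)
  then show ?thesis
    using sums_unique[OF t_sums] by simp
qed

lemma ln_le_diff_div_sqrt:
  fixes x :: real
  assumes "1 \<le> x"
  shows "ln x \<le> (x - 1) / sqrt x"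
proof (cases "x = 1")
  case False
  define u where "u = sqrt x"
  have "1 < u" "x = u\<^sup>2"
    using assms False by (auto simp: u_def)
  have "ln (1 + (u - 1)) - ln 1 \<le> (u - 1) * (inverse 1 + inverse (1 + (u - 1))) / 2"
    by (rule ln_inverse_approx_le) (use \<open>1 < u\<close> in auto)
  then have trapezoid: "ln u \<le> (u - 1) * (1 + inverse u) / 2"
    by simp
  have "ln x = 2 * ln u"
    using \<open>1 < u\<close> unfolding \<open>x = u\<^sup>2\<close> by (simp add: ln_realpow)
  also have "\<dots> \<le> (u - 1) * (1 + inverse u)"
    using trapezoid by simp
  also have "\<dots> = (x - 1) / sqrt x"
    using \<open>1 < u\<close> unfolding u_def[symmetric] \<open>x = u\<^sup>2\<close> by (simp add: field_simps power2_eq_square)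
  finally show ?thesis .
qed simp

lemma diff_sqrt_le:
  fixes A B :: real
  assumes "0 < A" "0 \<le> B" "B \<le> A\<^sup>2"
  shows "A - sqrt (A\<^sup>2 - B) \<le> A * B / (2 * A\<^sup>2 - B)"
proof -
  define s where "s = sqrt (A\<^sup>2 - B)"
  have "0 \<le> s" "s\<^sup>2 = A\<^sup>2 - B"
    using assms by (auto simp: s_def)
  have "s \<le> sqrt (A\<^sup>2)"
    unfolding s_def using assms by (intro real_sqrt_le_mono) simp
  then have "s \<le> A"
    using assms by simp
  then have sA: "A\<^sup>2 - B \<le> s * A"
    using \<open>0 \<le> s\<close> \<open>s\<^sup>2 = A\<^sup>2 - B\<close> by (metis mult_left_mono power2_eq_square)
  have "0 < 2 * A\<^sup>2 - B"
    using assms zero_less_power[of A 2] by linarith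
  have lower: "(2 * A\<^sup>2 - B) / A \<le> A + s"
    using sA assms by (simp add: divide_simps power2_eq_square algebra_simps)
  have "A - s = B / (A + s)"
    using \<open>s\<^sup>2 = A\<^sup>2 - B\<close> \<open>0 \<le> s\<close> assms by (simp add: field_simps power2_eq_square)
  also have "\<dots> \<le> B / ((2 * A\<^sup>2 - B) / A)"
    using lower \<open>0 < 2 * A\<^sup>2 - B\<close> \<open>0 \<le> s\<close> assms by (intro divide_left_mono mult_pos_pos) auto
  also have "\<dots> = A * B / (2 * A\<^sup>2 - B)"
    by simp
  finally show ?thesis unfolding s_def .
qed

lemma sigma21_radicand_nonneg:
  fixes L :: real
  assumes "1 \<le> L"
  shows "0 \<le> (1 + L^4)^2 - 4 * L * (1 + L^2)^2 * (1 - L)^2"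
proof -
  obtain v where v: "0 \<le> v" "L = 1 + v"
    using assms by (metis add.commute diff_add_cancel diff_ge_0_iff_ge)
  have "0 \<le> 4 + 16 * v + 24 * v^2 + 16 * v^3 + 8 * v^4 + 8 * v^5 + 8 * v^6 + 4 * v^7 + v^8"
    (is "_ \<le> ?p")
    using v(1) by (intro add_nonneg_nonneg mult_nonneg_nonneg zero_le_power) auto
  also have "?p = (1 + L^4)^2 - 4 * L * (1 + L^2)^2 * (1 - L)^2"
    unfolding v(2) by algebra
  finally show ?thesis .
qed

lemma sigma21_polynomial_bound:
  fixes L u :: real
  assumes "1 \<le> u" "L = u^2"
  shows "4 * (1 + L^4) * (1 + L^2) * (L - 1)^2 * u
     \<le> (L + 1) * (2 * (1 + L^4)^2 - 4 * L * (1 + L^2)^2 * (1 - L)^2)"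
proof -
  obtain v where v: "0 \<le> v" "u = 1 + v"
    using assms by (metis add.commute diff_add_cancel diff_ge_0_iff_ge)
  have "0 \<le> 16 + 144 * v + 648 * v^2 + 1920 * v^3 + 4240 * v^4 + 7504 * v^5 + 11216 * v^6
      + 14672 * v^7 + 17368 * v^8 + 19080 * v^9 + 19280 * v^10 + 17120 * v^11 + 12632 * v^12
      + 7384 * v^13 + 3284 * v^14 + 1064 * v^15 + 236 * v^16 + 32 * v^17 + 2 * v^18"
    (is "_ \<le> ?p")
    using v(1) by (intro add_nonneg_nonneg mult_nonneg_nonneg zero_le_power) auto
  also have "?p = (L + 1) * (2 * (1 + L^4)^2 - 4 * L * (1 + L^2)^2 * (1 - L)^2)
      - 4 * (1 + L^4) * (1 + L^2) * (L - 1)^2 * u"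
    unfolding assms(2) v(2) by algebra
  finally show ?thesis by simp
qed

lemma sigma02_le_sigma12:
  fixes L :: real
  assumes "1 < L"
  shows "(L + 1) / (L * ln L) \<le> ((L^2 + 1) + sqrt ((L - 1)^4 + 4 * L^2)) / (2 * L * (L - 1))"
proof -
  have sqrt_ge: "2 * L \<le> sqrt ((L - 1)^4 + 4 * L^2)"
    by (intro real_le_rsqrt) (simp add: power_mult_distrib)
  have "(L + 1) / (L * ln L) \<le> (L + 1) / (L * (2 * (L - 1) / (L + 1)))"
    using ln_ge_two_mult_diff_div_add[of L] assms
    by (intro divide_left_mono mult_left_mono mult_pos_pos) auto
  also have "\<dots> = ((L^2 + 1) + 2 * L) / (2 * L * (L - 1))"
    using assms by (simp add: field_simps power2_eq_square)
  also have "\<dots> \<le> ((L^2 + 1) + sqrt ((L - 1)^4 + 4 * L^2)) / (2 * L * (L - 1))"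
    using assms sqrt_ge by (intro divide_right_mono) auto
  finally show ?thesis .
qed

lemma sigma21_le_sigma02:
  fixes L :: real
  assumes "1 < L"
  shows "((1 + L^4) - sqrt ((1 + L^4)^2 - 4 * L * (1 + L^2)^2 * (1 - L)^2))
           / (L * (L - 1) * (1 + L^2)) \<le> (L + 1) / (L * ln L)"
proof -
  define A where "A = 1 + L^4"
  define B where "B = 4 * L * (1 + L^2)^2 * (1 - L)^2"
  define D where "D = L * (L - 1) * (1 + L^2)"
  define u where "u = sqrt L"
  have "0 < A" "0 < D" "1 < u" "L = u^2"
    using assms by (auto simp: A_def D_def u_def add_pos_nonneg)
  have "0 \<le> B" "B \<le> A\<^sup>2"
    using sigma21_radicand_nonneg[of L] assms by (auto simp: A_def B_def)
  then have "0 < 2 * A\<^sup>2 - B"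
    using \<open>0 < A\<close> zero_less_power[of A 2] by linarith
  have "B = D * (4 * (1 + L^2) * (L - 1))"
    by (simp add: B_def D_def power2_eq_square algebra_simps)
  then have B_div_D: "B / D = 4 * (1 + L^2) * (L - 1)"
    using \<open>0 < D\<close> by simp
  have "(A - sqrt (A\<^sup>2 - B)) / D \<le> A * B / (2 * A\<^sup>2 - B) / D"
    using diff_sqrt_le[OF \<open>0 < A\<close> \<open>0 \<le> B\<close> \<open>B \<le> A\<^sup>2\<close>] \<open>0 < D\<close> by (intro divide_right_mono) auto
  also have "\<dots> = A * (B / D) / (2 * A\<^sup>2 - B)"
    by simp
  also have "\<dots> = 4 * A * (1 + L^2) * (L - 1) / (2 * A\<^sup>2 - B)"
    unfolding B_div_D by simp
  also have "\<dots> \<le> (L + 1) / ((L - 1) * u)"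
  proof -
    have frac_le: "c / N \<le> X / Y" if "0 < N" "0 < Y" "c * Y \<le> X * N" for c N X Y :: real
      using that by (simp add: divide_simps)
    have "4 * A * (1 + L^2) * (L - 1)^2 * u \<le> (L + 1) * (2 * A\<^sup>2 - B)"
      using sigma21_polynomial_bound[OF _ \<open>L = u^2\<close>] \<open>1 < u\<close> unfolding A_def B_def by simp
    then have "4 * A * (1 + L^2) * (L - 1) * ((L - 1) * u) \<le> (L + 1) * (2 * A\<^sup>2 - B)"
      by (simp add: power2_eq_square mult.assoc)
    then show ?thesis
      using \<open>0 < 2 * A\<^sup>2 - B\<close> assms \<open>1 < u\<close> by (intro frac_le) auto
  qed
  also have "\<dots> = (L + 1) / (L * ((L - 1) / sqrt L))"
    using \<open>1 < u\<close> \<open>L = u^2\<close> by (simp add: u_def[symmetric] power2_eq_square)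
  also have "\<dots> \<le> (L + 1) / (L * ln L)"
    using ln_le_diff_div_sqrt[of L] assms
    by (intro divide_left_mono mult_left_mono mult_pos_pos) auto
  finally show ?thesis
    unfolding A_def B_def D_def .
qed

theorem lemma2p2:
  fixes L :: real
  assumes "L > 1"
  shows "(L + 1) / (L * ln L)
           \<le> ((L^2 + 1) + sqrt ((L - 1)^4 + 4 * L^2)) / (2 * L * (L - 1))
         \<and> ((1 + L^4) - sqrt ((1 + L^4)^2 - 4 * L * (1 + L^2)^2 * (1 - L)^2))
             / (L * (L - 1) * (1 + L^2))
           \<le> (L + 1) / (L * ln L)"
  using sigma02_le_sigma12[OF assms] sigma21_le_sigma02[OF assms] by (rule conjI)

end
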